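(* Consider a run of Algorithm 3 (described in the context). Fix a hypercube $I_j$ and a run on $I_j$ of length $\zeta$ (number of queries), and suppose that a total of $\xi$ signals were corrupted during this run. Then the pricing rounds of this run incur total pricing loss $L\cdot O(\zeta\eta_0+\xi\tau_0)$, with an absolute constant.
   Context: Problem. Fix $L>0$, $d\ge 1$, horizon $T\ge 2$. An adversary fixes an unknown $f:[0,1]^d\to[0,L]$ with $|f(x)-f(y)|\le L\|x-y\|_\infty$. In each round $t=1,\dots,T$: the adversary chooses $x_t\in[0,1]^d$; the learner observes $x_t$ and posts $q_t$; the adversary observes $q_t$ and sends $\sigma_t\in\{0,1\}$. With $\sigma(u)=1$ if $u>0$, $0$ if $u\le 0$: uncorrupted rounds have $\sigma_t=\sigma(q_t-f(x_t))$, corrupted rounds $\sigma_t=1-\sigma(q_t-f(x_t))$; the adversary chooses adaptively which rounds to corrupt, at most $C$ in total, $C$ unknown to the learner. The pricing loss of round $t$ is $f(x_t)-q_t\cdot\mathbb{1}[q_t\le f(x_t)]$. $\mathtt{len}$ denotes length of an interval and side length of a hypercube. $\mathtt{MidpointQuery}(I,Y)$, $Y=[a,b]$: guess $q=(a+b)/2$; if $\sigma_t=1$ return $Y\cap[0,q+L\,\mathtt{len}(I)]$, if $\sigma_t=0$ return $Y\cap[q-L\,\mathtt{len}(I),\infty)$. Algorithm 3 (parameters $\eta_0=T^{-1/(d+1)}$ and a schedule $\tau_0\ge1$). Uniformly partition $[0,1]^d$ into hypercubes of side length $\Theta(\eta_0)$; each hypercube $I_j$ has range $Y_j$ (initially $[0,L]$)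 and counter $c_j$ (initially $0$). In round $t$, with $I_j\ni x_t$: if $\mathtt{len}(Y_j)<10L\eta_0$ ($I_j$ pricing-ready), set $c_j:=c_j+1$; if $c_j>\tau_0$ guess $\max(Y_j)$ (checking round) and set $c_j:=0$, else guess $\min(Y_j)$ (pricing round). The learner becomes "surprised" when a checking round receives $\sigma_t=0$ or a pricing round receives $\sigma_t=1$; it then sets $Y_j:=[0,L]$, $c_j:=0$. If $I_j$ is not pricing-ready, it performs a searching round $Y_j:=\mathtt{MidpointQuery}(I_j,Y_j)$. Runs. For a fixed hypercube $I_j$, a run is the set of queries (rounds whose context lies in $I_j$) from the start of the algorithm or from the most recent reset of $Y_j$ up to the round in which the learner becomes surprised on $I_j$ (or until the algorithm terminates). Its length is the number of such queries. *)

theory Defs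
  imports Complex_Main
begin

(* Contexts are points of [0,1]^d, represented as functions nat => real whose
   coordinates i >= d are 0. *)
definition cube01 :: "nat \<Rightarrow> (nat \<Rightarrow> real) set" where
  "cube01 d = {p. (\<forall>i<d. 0 \<le> p i \<and> p i \<le> 1) \<and> (\<forall>i\<ge>d. p i = 0)}"

definition supdist :: "nat \<Rightarrow> (nat \<Rightarrow> real) \<Rightarrow> (nat \<Rightarrow> real) \<Rightarrow> real" where
  "supdist d p q = Max ((\<lambda>i. \<bar>p i - q i\<bar>) ` {..<d})"

definition eta0 :: "nat \<Rightarrow> nat \<Rightarrow> real" where
  "eta0 T d = real T powr (- 1 / (real d + 1))"

(* number of cells per axis: m = ceil(1/eta0); cells have side length 1/m = Theta(eta0) *)
definition grid :: "nat \<Rightarrow> nat \<Rightarrow> nat" where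
  "grid T d = nat \<lceil>1 / eta0 T d\<rceil>"

type_synonym cell = "nat \<Rightarrow> nat"

(* the hypercube containing p: index floor(m*p_i), the right boundary 1 belongs to the last cell *)
definition cell_of :: "nat \<Rightarrow> nat \<Rightarrow> (nat \<Rightarrow> real) \<Rightarrow> cell" where
  "cell_of m d p = (\<lambda>i. if i < d then min (m - 1) (nat \<lfloor>real m * p i\<rfloor>) else 0)"

definition sgn01 :: "real \<Rightarrow> bool" where
  "sgn01 u = (u > 0)"

(* MidpointQuery(I,Y) with len(I) = ell, Y = [a,b] *)
definition midpoint_query :: "real \<Rightarrow> real \<Rightarrow> real \<times> real \<Rightarrow> bool \<Rightarrow> real \<times> real" where
  "midpoint_query L ell Y sig =
     (let a = fst Y; b = snd Y; q = (a + b) / 2 in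
      if sig then (max a 0, min b (q + L * ell)) else (max a (q - L * ell), b))"

datatype rkind = Searching | Pricing | Checking

(* learner state: range Y_j and counter c_j for every cell *)
type_synonym lstate = "(cell \<Rightarrow> real \<times> real) \<times> (cell \<Rightarrow> nat)"

definition init_state :: "real \<Rightarrow> lstate" where
  "init_state L = ((\<lambda>_. (0, L)), (\<lambda>_. 0))"

definition round_kind :: "real \<Rightarrow> real \<Rightarrow> real \<Rightarrow> lstate \<Rightarrow> cell \<Rightarrow> rkind" where
  "round_kind L eta tau st j =
     (if snd (fst st j) - fst (fst st j) < 10 * L * eta
      then (if real (snd st j + 1) > tau then Checking else Pricing)
      else Searching)"

definition guess :: "lstate \<Rightarrow> cell \<Rightarrow> rkind \<Rightarrow> real" where
  "guess st j k = (case k of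
      Checking \<Rightarrow> snd (fst st j)
    | Pricing \<Rightarrow> fst (fst st j)
    | Searching \<Rightarrow> (fst (fst st j) + snd (fst st j)) / 2)"

definition surprised_by :: "rkind \<Rightarrow> bool \<Rightarrow> bool" where
  "surprised_by k sig = ((k = Checking \<and> \<not> sig) \<or> (k = Pricing \<and> sig))"

definition update :: "real \<Rightarrow> real \<Rightarrow> lstate \<Rightarrow> cell \<Rightarrow> rkind \<Rightarrow> bool \<Rightarrow> lstate" where
  "update L ell st j k sig = (let Y = fst st; c = snd st in
     (case k of
        Searching \<Rightarrow> (Y(j := midpoint_query L ell (Y j) sig), c)
      | Pricing \<Rightarrow> (if sig then (Y(j := (0, L)), c(j := 0)) else (Y, c(j := c j + 1)))
      | Checking \<Rightarrow> (if sig then (Y, c(j := 0)) else (Y(j := (0, L)), c(j := 0)))))"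

(* An instance: L, d, T, tau0, the valuation f, the realised contexts x t (t = 0..T-1,
   round t here is round t+1 of the paper) and the realised corruption pattern corr t.
   Since the learner is deterministic, every adaptive adversary induces such sequences. *)

definition signal :: "((nat \<Rightarrow> real) \<Rightarrow> real) \<Rightarrow> (nat \<Rightarrow> real) \<Rightarrow> real \<Rightarrow> bool \<Rightarrow> bool" where
  "signal f p q cor = (if cor then \<not> sgn01 (q - f p) else sgn01 (q - f p))"

primrec alg_state :: "real \<Rightarrow> nat \<Rightarrow> nat \<Rightarrow> real \<Rightarrow> ((nat \<Rightarrow> real) \<Rightarrow> real)
    \<Rightarrow> (nat \<Rightarrow> nat \<Rightarrow> real) \<Rightarrow> (nat \<Rightarrow> bool) \<Rightarrow> nat \<Rightarrow> lstate" where
  "alg_state L d T tau f x corr 0 = init_state L"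
| "alg_state L d T tau f x corr (Suc t) =
     (let st = alg_state L d T tau f x corr t;
          m = grid T d;
          j = cell_of m d (x t);
          k = round_kind L (eta0 T d) tau st j;
          q = guess st j k
      in update L (1 / real m) st j k (signal f (x t) q (corr t)))"

definition kind_at :: "real \<Rightarrow> nat \<Rightarrow> nat \<Rightarrow> real \<Rightarrow> ((nat \<Rightarrow> real) \<Rightarrow> real)
    \<Rightarrow> (nat \<Rightarrow> nat \<Rightarrow> real) \<Rightarrow> (nat \<Rightarrow> bool) \<Rightarrow> nat \<Rightarrow> rkind" where
  "kind_at L d T tau f x corr t =
     round_kind L (eta0 T d) tau (alg_state L d T tau f x corr t) (cell_of (grid T d) d (x t))"

definition guess_at :: "real \<Rightarrow> nat \<Rightarrow> nat \<Rightarrow> real \<Rightarrow> ((nat \<Rightarrow> real) \<Rightarrow> real)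
    \<Rightarrow> (nat \<Rightarrow> nat \<Rightarrow> real) \<Rightarrow> (nat \<Rightarrow> bool) \<Rightarrow> nat \<Rightarrow> real" where
  "guess_at L d T tau f x corr t =
     guess (alg_state L d T tau f x corr t) (cell_of (grid T d) d (x t)) (kind_at L d T tau f x corr t)"

definition surprised_at :: "real \<Rightarrow> nat \<Rightarrow> nat \<Rightarrow> real \<Rightarrow> ((nat \<Rightarrow> real) \<Rightarrow> real)
    \<Rightarrow> (nat \<Rightarrow> nat \<Rightarrow> real) \<Rightarrow> (nat \<Rightarrow> bool) \<Rightarrow> nat \<Rightarrow> bool" where
  "surprised_at L d T tau f x corr t =
     surprised_by (kind_at L d T tau f x corr t)
       (signal f (x t) (guess_at L d T tau f x corr t) (corr t))"

definition pricing_loss :: "real \<Rightarrow> real \<Rightarrow> real" where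
  "pricing_loss v q = v - (if q \<le> v then q else 0)"

(* The run on cell j consisting of the queries to j in rounds s..e-1: it starts at the
   beginning of the algorithm or right after a reset of Y_j (surprise on j in round s-1),
   contains no surprise on j except possibly in its last round e-1, and ends with a
   surprise on j in round e-1 or at termination (e = T). *)
definition is_run :: "real \<Rightarrow> nat \<Rightarrow> nat \<Rightarrow> real \<Rightarrow> ((nat \<Rightarrow> real) \<Rightarrow> real)
    \<Rightarrow> (nat \<Rightarrow> nat \<Rightarrow> real) \<Rightarrow> (nat \<Rightarrow> bool) \<Rightarrow> cell \<Rightarrow> nat \<Rightarrow> nat \<Rightarrow> bool" where
  "is_run L d T tau f x corr j s e \<longleftrightarrow>
     s \<le> e \<and> e \<le> T \<and>
     (s = 0 \<or> (cell_of (grid T d) d (x (s - 1)) = j \<and> surprised_at L d T tau f x corr (s - 1))) \<and>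
     (\<forall>t. s \<le> t \<and> t < e \<and> cell_of (grid T d) d (x t) = j \<and> surprised_at L d T tau f x corr t
          \<longrightarrow> t = e - 1) \<and>
     (e = T \<or> (s < e \<and> cell_of (grid T d) d (x (e - 1)) = j \<and> surprised_at L d T tau f x corr (e - 1)))"

definition run_rounds :: "nat \<Rightarrow> nat \<Rightarrow> (nat \<Rightarrow> nat \<Rightarrow> real) \<Rightarrow> cell \<Rightarrow> nat \<Rightarrow> nat \<Rightarrow> nat set" where
  "run_rounds d T x j s e = {t \<in> {s..<e}. cell_of (grid T d) d (x t) = j}"

end

theory Submission
  imports Defs
begin

text \<open>
  A pricing round posts \<open>min Y\<^sub>j\<close> while \<open>len Y\<^sub>j < 10 L \<eta>\<^sub>0\<close>, so it loses at most
  \<open>11 L \<eta>\<^sub>0\<close> unless it is mispriced: \<open>f(x\<^sub>t) < min Y\<^sub>j\<close> or \<open>f(x\<^sub>t) > max Y\<^sub>j + L \<eta>\<^sub>0\<close>.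
  As long as no signal on \<open>I\<^sub>j\<close> is corrupted, \<open>Y\<^sub>j\<close> contains \<open>f\<close> on the whole cell, so
  mispricing forces \<open>\<xi> \<ge> 1\<close>. A price above the value surprises the learner unless the
  signal is corrupted, so there are at most \<open>\<xi> + 1\<close> such rounds. If some round is priced
  below \<open>f(x\<^sub>t) - L \<eta>\<^sub>0\<close>, then, since \<open>Y\<^sub>j\<close> is frozen once pricing-ready and \<open>f\<close> varies by
  at most \<open>L \<eta>\<^sub>0\<close> on the cell, every checking round would see \<open>\<sigma>\<^sub>t = 0\<close>; hence all of them but
  the last are corrupted, and as at most \<open>\<tau>\<^sub>0\<close> pricing rounds pass between resets of \<open>c\<^sub>j\<close>,
  there are at most \<open>\<tau>\<^sub>0 (\<xi> + 2)\<close> pricing rounds. Altogether at most \<open>5 \<tau>\<^sub>0 \<xi>\<close> rounds are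
  mispriced, each losing at most \<open>L\<close>.
\<close>

lemma cell_index_bounds:
  fixes u :: real
  assumes "0 \<le> u" "u \<le> 1" "1 \<le> m"
  defines "k \<equiv> min (m - 1) (nat \<lfloor>real m * u\<rfloor>)"
  shows "real k \<le> real m * u" "real m * u \<le> real k + 1"
proof -
  have mu: "0 \<le> real m * u" "real m * u \<le> real m"
    using assms(1-3) by (auto simp: mult_left_le)
  show "real k \<le> real m * u"
    using of_nat_floor[OF mu(1)] unfolding k_def by linarith
  show "real m * u \<le> real k + 1"
  proof (cases "nat \<lfloor>real m * u\<rfloor> \<le> m - 1")
    case True
    then show ?thesis using mu(1) unfolding k_def by (simp add: min_absorb2)
  next
    case False
    then show ?thesis using mu(2) assms(3) unfolding k_def by (simp add: of_nat_diff)
  qed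
qed

lemma same_cell_coordinate_dist:
  assumes "p \<in> cube01 d" "p' \<in> cube01 d" "cell_of m d p = cell_of m d p'" "1 \<le> m" "i < d"
  shows "\<bar>p i - p' i\<bar> \<le> 1 / real m"
proof -
  have "min (m - 1) (nat \<lfloor>real m * p i\<rfloor>) = min (m - 1) (nat \<lfloor>real m * p' i\<rfloor>)"
    using fun_cong[OF assms(3), of i] assms(5) by (simp add: cell_of_def)
  moreover have "0 \<le> p i" "p i \<le> 1" "0 \<le> p' i" "p' i \<le> 1"
    using assms(1,2,5) by (auto simp: cube01_def)
  ultimately have "\<bar>real m * p i - real m * p' i\<bar> \<le> 1"
    using cell_index_bounds[of "p i" m] cell_index_bounds[of "p' i" m] assms(4)
    by (simp add: abs_le_iff)
  then have "real m * \<bar>p i - p' i\<bar> \<le> 1"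
    by (simp add: abs_mult right_diff_distrib[symmetric])
  then show ?thesis
    using assms(4) by (simp add: field_simps)
qed

lemma same_cell_supdist:
  assumes "p \<in> cube01 d" "p' \<in> cube01 d" "cell_of m d p = cell_of m d p'" "1 \<le> m" "1 \<le> d"
  shows "supdist d p p' \<le> 1 / real m"
  unfolding supdist_def using assms same_cell_coordinate_dist[OF assms(1-4)]
  by (subst Max_le_iff) (auto simp: lessThan_empty_iff)

lemma eta0_pos: "2 \<le> T \<Longrightarrow> 0 < eta0 T d"
  by (simp add: eta0_def)

lemma grid_pos: "2 \<le> T \<Longrightarrow> 1 \<le> grid T d"
  using eta0_pos[of T d] by (simp add: grid_def Suc_le_eq)

lemma inverse_grid_le_eta0: "2 \<le> T \<Longrightarrow> 1 / real (grid T d) \<le> eta0 T d"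
proof -
  assume "2 \<le> T"
  then have "0 < eta0 T d" "1 / eta0 T d \<le> real (grid T d)"
    using eta0_pos unfolding grid_def by (auto intro: real_nat_ceiling_ge)
  then show ?thesis
    by (simp add: divide_le_eq mult.commute pos_divide_le_eq)
qed

lemma pricing_loss_le_value: "0 \<le> q \<Longrightarrow> pricing_loss v q \<le> v"
  by (simp add: pricing_loss_def)

lemma pricing_loss_accepted: "q \<le> v \<Longrightarrow> pricing_loss v q = v - q"
  by (simp add: pricing_loss_def)

lemma midpoint_query_keeps_value:
  assumes "v \<in> {a..b}" "0 \<le> v" "\<bar>v - w\<bar> \<le> L * ell"
  defines "Y \<equiv> midpoint_query L ell (a, b) (sgn01 ((a + b) / 2 - w))"
  shows "v \<in> {fst Y..snd Y}"
  using assms unfolding Y_def midpoint_query_def sgn01_def Let_def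
  by (auto simp: abs_le_iff field_simps)

lemma update_other_cell:
  assumes "j \<noteq> j0"
  shows "fst (update L ell st j0 k sig) j = fst st j" "snd (update L ell st j0 k sig) j = snd st j"
  using assms by (cases k; simp add: update_def Let_def)+

lemma update_range_Searching:
  "fst (update L ell st j0 Searching sig) j0 = midpoint_query L ell (fst st j0) sig"
  by (simp add: update_def Let_def)

lemma update_range_ready:
  "k \<noteq> Searching \<Longrightarrow> fst (update L ell st j0 k sig) j0 \<in> {fst st j0, (0, L)}"
  by (cases k) (auto simp: update_def Let_def)

lemma update_range_unsurprised:
  "k \<noteq> Searching \<Longrightarrow> \<not> surprised_by k sig \<Longrightarrow> fst (update L ell st j0 k sig) j0 = fst st j0"
  by (cases k) (auto simp: update_def Let_def surprised_by_def)

lemma update_range_surprised: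
  "surprised_by k sig \<Longrightarrow> fst (update L ell st j0 k sig) j0 = (0, L)"
  by (cases k) (auto simp: update_def Let_def surprised_by_def)

lemma round_kind_ready_iff:
  "round_kind L eta tau st j \<noteq> Searching \<longleftrightarrow> snd (fst st j) - fst (fst st j) < 10 * L * eta"
  by (simp add: round_kind_def)

lemma round_kind_Pricing_counter:
  "round_kind L eta tau st j = Pricing \<Longrightarrow> real (snd st j + 1) \<le> tau"
  by (auto simp: round_kind_def split: if_splits)

lemma update_preserves_state_bounds:
  assumes "\<forall>j. 0 \<le> fst (fst st j) \<and> real (snd st j) \<le> tau" "0 \<le> L" "1 \<le> tau"
    and "k = Pricing \<Longrightarrow> real (snd st j0 + 1) \<le> tau"
  shows "\<forall>j. 0 \<le> fst (fst (update L ell st j0 k sig) j) \<and> real (snd (update L ell st j0 k sig) j) \<le> tau"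
proof -
  have "0 \<le> fst (fst st j0)"
    using assms(1) by blast
  then show ?thesis
    using assms by (cases k) (auto simp: update_def midpoint_query_def Let_def le_max_iff_disj)
qed

text \<open>No round on \<open>j0\<close> decreases the potential \<open>\<tau> \<cdot> #resets + c\<^sub>j0 - #pricing rounds\<close>.\<close>
lemma update_counter_potential:
  assumes "real (snd st j0) \<le> tau" "k = Pricing \<Longrightarrow> real (snd st j0 + 1) \<le> tau"
  shows "real (snd st j0) + of_bool (k = Pricing)
           \<le> real (snd (update L ell st j0 k sig) j0) + tau * of_bool (k = Checking \<or> surprised_by k sig)"
  using assms by (cases k) (auto simp: update_def Let_def surprised_by_def)

lemma card_filter_atLeastLessThan_Suc:
  "s \<le> t \<Longrightarrow> card {u \<in> {s..<Suc t}. P u} = card {u \<in> {s..<t}. P u} + of_bool (P t)"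
proof -
  assume "s \<le> t"
  then have "{u \<in> {s..<Suc t}. P u} = (if P t then insert t {u \<in> {s..<t}. P u} else {u \<in> {s..<t}. P u})"
    by (auto simp: less_Suc_eq)
  then show ?thesis
    by simp
qed

locale pricing_game =
  fixes L :: real and d T :: nat and tau :: real and f :: "(nat \<Rightarrow> real) \<Rightarrow> real"
    and x :: "nat \<Rightarrow> nat \<Rightarrow> real" and corr :: "nat \<Rightarrow> bool"
  assumes L_pos: "0 < L" and d_pos: "1 \<le> d" and T_ge_2: "2 \<le> T" and tau_ge_1: "1 \<le> tau"
    and f_range: "\<forall>p\<in>cube01 d. 0 \<le> f p \<and> f p \<le> L"
    and f_lipschitz: "\<forall>p\<in>cube01 d. \<forall>p'\<in>cube01 d. \<bar>f p - f p'\<bar> \<le> L * supdist d p p'"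
    and x_in_cube: "\<forall>t<T. x t \<in> cube01 d"
begin

abbreviation "eta \<equiv> eta0 T d"
abbreviation "cell p \<equiv> cell_of (grid T d) d p"
abbreviation "state t \<equiv> alg_state L d T tau f x corr t"
abbreviation "kind t \<equiv> kind_at L d T tau f x corr t"
abbreviation "price t \<equiv> guess_at L d T tau f x corr t"
abbreviation "feedback t \<equiv> signal f (x t) (price t) (corr t)"
abbreviation "surprise t \<equiv> surprised_at L d T tau f x corr t"

lemma state_Suc:
  "state (Suc t) = update L (1 / real (grid T d)) (state t) (cell (x t)) (kind t) (feedback t)"
  by (simp add: kind_at_def guess_at_def Let_def)

declare alg_state.simps(2) [simp del]

lemma kind_eq: "kind t = round_kind L eta tau (state t) (cell (x t))"
  by (simp add: kind_at_def)

lemma price_eq: "price t = guess (state t) (cell (x t)) (kind t)"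
  by (simp add: guess_at_def)

lemma surprise_iff: "surprise t \<longleftrightarrow> surprised_by (kind t) (feedback t)"
  by (simp add: surprised_at_def)

lemma state_bounds: "0 \<le> fst (fst (state t) j) \<and> real (snd (state t) j) \<le> tau"
proof (induction t arbitrary: j)
  case 0
  then show ?case
    using tau_ge_1 by (simp add: init_state_def)
next
  case (Suc t)
  have "kind t = Pricing \<Longrightarrow> real (snd (state t) (cell (x t)) + 1) \<le> tau"
    using round_kind_Pricing_counter kind_eq by metis
  then show ?case
    using update_preserves_state_bounds[of "state t" tau L] Suc.IH L_pos tau_ge_1
    unfolding state_Suc by (meson less_imp_le)
qed

lemma f_lipschitz_on_cell:
  assumes "p \<in> cube01 d" "p' \<in> cube01 d" "cell p = cell p'"
  shows "\<bar>f p - f p'\<bar> \<le> L * (1 / real (grid T d))"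
  using f_lipschitz assms(1,2) L_pos same_cell_supdist[OF assms grid_pos[OF T_ge_2] d_pos]
  by (meson mult_left_mono less_imp_le order_trans)

lemma L_eta_pos: "0 < L * eta"
  using L_pos eta0_pos[OF T_ge_2] by simp

lemma L_mul_inverse_grid_le: "L * (1 / real (grid T d)) \<le> L * eta"
  using mult_left_mono[OF inverse_grid_le_eta0[OF T_ge_2, of d], of L] L_pos by simp

end

locale cell_run = pricing_game +
  fixes j :: cell and s e :: nat
  assumes run: "is_run L d T tau f x corr j s e"
begin

abbreviation "Y t \<equiv> fst (state t) j"
abbreviation "counter t \<equiv> snd (state t) j"
abbreviation "R \<equiv> run_rounds d T x j s e"
abbreviation "pricing \<equiv> {t \<in> R. kind t = Pricing}"
abbreviation "corrupted \<equiv> {t \<in> R. corr t}"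

lemma run_le: "s \<le> e" "e \<le> T"
  using run by (auto simp: is_run_def)

lemma mem_run_rounds_iff: "t \<in> R \<longleftrightarrow> s \<le> t \<and> t < e \<and> cell (x t) = j"
  by (auto simp: run_rounds_def)

lemma surprise_in_run_is_last: "\<lbrakk>s \<le> t; t < e; cell (x t) = j; surprise t\<rbrakk> \<Longrightarrow> t = e - 1"
  using run unfolding is_run_def by blast

lemma range_at_start: "Y s = (0, L)"
proof (cases s)
  case 0
  then show ?thesis
    by (simp add: init_state_def)
next
  case (Suc s')
  then have "cell (x s') = j" "surprise s'"
    using run by (auto simp: is_run_def)
  then show ?thesis
    using Suc update_range_surprised by (simp add: state_Suc surprise_iff)
qed

lemma range_contains_values:
  assumes "s \<le> t" "t \<le> e" "\<forall>u\<in>{s..<t}. cell (x u) = j \<longrightarrow> \<not> corr u"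
    and p: "p \<in> cube01 d" "cell p = j"
  shows "f p \<in> {fst (Y t)..snd (Y t)}"
  using assms(1-3)
proof (induction t rule: nat_induct_at_least)
  case base
  then show ?case
    using range_at_start f_range p by simp
next
  case (Suc t)
  then have IH: "f p \<in> {fst (Y t)..snd (Y t)}"
    by simp
  show ?case
  proof (cases "cell (x t) = j")
    case False
    then show ?thesis
      using IH by (simp add: state_Suc update_other_cell)
  next
    case here: True
    show ?thesis
    proof (cases "kind t = Searching")
      case False
      then have "Y (Suc t) \<in> {Y t, (0, L)}"
        using update_range_ready[OF False] here by (simp add: state_Suc)
      then show ?thesis
        using IH f_range p by auto
    next
      case True
      obtain a b where ab: "Y t = (a, b)"
        by fastforce
      have "x t \<in> cube01 d"
        using Suc run_le x_in_cube by simp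
      then have "\<bar>f p - f (x t)\<bar> \<le> L * (1 / real (grid T d))"
        using f_lipschitz_on_cell p here by simp
      moreover have "feedback t = sgn01 ((a + b) / 2 - f (x t))"
        using Suc here True ab by (simp add: price_eq guess_def signal_def)
      ultimately show ?thesis
        using midpoint_query_keeps_value[of "f p" a b] IH ab f_range p here True
        by (simp add: state_Suc update_range_Searching)
    qed
  qed
qed

lemma range_frozen:
  assumes "t1 \<in> R" "kind t1 \<noteq> Searching" "t1 \<le> t" "t < e"
  shows "Y t = Y t1"
  using assms(3,4)
proof (induction t rule: nat_induct_at_least)
  case base
  then show ?case
    by simp
next
  case (Suc t)
  then have IH: "Y t = Y t1"
    by simp
  show ?case
  proof (cases "cell (x t) = j")
    case False
    then show ?thesis
      using IH by (simp add: state_Suc update_other_cell)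
  next
    case True
    have "kind t \<noteq> Searching"
      using assms(1,2) IH True by (simp add: kind_eq round_kind_ready_iff mem_run_rounds_iff)
    moreover have "\<not> surprise t"
      using surprise_in_run_is_last[of t] True Suc assms(1) by (auto simp: mem_run_rounds_iff)
    ultimately show ?thesis
      using IH True by (simp add: state_Suc update_range_unsurprised surprise_iff)
  qed
qed

definition pricing_before :: "nat \<Rightarrow> nat set" where
  "pricing_before t = {u \<in> {s..<t}. cell (x u) = j \<and> kind u = Pricing}"

definition resets_before :: "nat \<Rightarrow> nat set" where
  "resets_before t = {u \<in> {s..<t}. cell (x u) = j \<and> (kind u = Checking \<or> surprise u)}"

lemma card_pricing_before:
  "s \<le> t \<Longrightarrow> real (card (pricing_before t)) \<le> tau * real (card (resets_before t)) + real (counter t)"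
proof (induction t rule: nat_induct_at_least)
  case base
  then show ?case
    by (simp add: pricing_before_def resets_before_def)
next
  case (Suc t)
  have P: "real (card (pricing_before (Suc t)))
      = real (card (pricing_before t)) + of_bool (cell (x t) = j \<and> kind t = Pricing)"
    unfolding pricing_before_def card_filter_atLeastLessThan_Suc[OF Suc.hyps] by simp
  have C: "real (card (resets_before (Suc t)))
      = real (card (resets_before t)) + of_bool (cell (x t) = j \<and> (kind t = Checking \<or> surprise t))"
    unfolding resets_before_def card_filter_atLeastLessThan_Suc[OF Suc.hyps] by simp
  show ?case
  proof (cases "cell (x t) = j")
    case False
    then show ?thesis
      using Suc.IH P C by (simp add: state_Suc update_other_cell)
  next
    case True
    have "kind t = Pricing \<Longrightarrow> real (counter t + 1) \<le> tau"
      using round_kind_Pricing_counter True by (metis kind_eq)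
    then have "real (counter t) + of_bool (kind t = Pricing)
        \<le> real (counter (Suc t)) + tau * of_bool (kind t = Checking \<or> surprise t)"
      using update_counter_potential state_bounds True by (simp add: state_Suc surprise_iff)
    then show ?thesis
      using Suc.IH unfolding P C distrib_left True by simp
  qed
qed

lemma pricing_eq_pricing_before: "pricing = pricing_before e"
  by (auto simp: pricing_before_def run_rounds_def)

lemma pricing_round:
  assumes "t \<in> pricing"
  shows "x t \<in> cube01 d" "price t = fst (Y t)" "snd (Y t) - fst (Y t) < 10 * L * eta"
proof -
  have t: "s \<le> t" "t < e" "cell (x t) = j" "kind t = Pricing"
    using assms by (auto simp: mem_run_rounds_iff)
  then show "x t \<in> cube01 d"
    using run_le x_in_cube by simp
  show "price t = fst (Y t)"
    using t by (simp add: price_eq guess_def)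
  show "snd (Y t) - fst (Y t) < 10 * L * eta"
    using t round_kind_ready_iff[of L eta tau "state t" j] kind_eq[of t] by simp
qed

definition overpriced :: "nat set" where
  "overpriced = {t \<in> pricing. f (x t) < fst (Y t)}"

definition underpriced :: "nat set" where
  "underpriced = {t \<in> pricing. snd (Y t) + L * eta < f (x t)}"

lemma overpriced_subset: "overpriced \<subseteq> corrupted \<union> {e - 1}"
proof
  fix t
  assume t: "t \<in> overpriced"
  show "t \<in> corrupted \<union> {e - 1}"
  proof (cases "corr t")
    case False
    then have "surprise t"
      using t pricing_round(2)[of t] by (simp add: overpriced_def surprise_iff surprised_by_def signal_def sgn01_def)
    then show ?thesis
      using t surprise_in_run_is_last by (simp add: overpriced_def mem_run_rounds_iff)
  qed (use t in \<open>simp add: overpriced_def\<close>)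
qed

lemma resets_subset_if_underpriced:
  assumes "tv \<in> underpriced"
  shows "resets_before e \<subseteq> corrupted \<union> {e - 1}"
proof
  fix u
  assume u: "u \<in> resets_before e"
  then have uR: "u \<in> R" and ureset: "kind u = Checking \<or> surprise u"
    by (auto simp: resets_before_def mem_run_rounds_iff)
  show "u \<in> corrupted \<union> {e - 1}"
  proof (cases "u = e - 1")
    case False
    then have not_surprised: "\<not> surprise u"
      using uR surprise_in_run_is_last by (auto simp: mem_run_rounds_iff)
    then have is_check: "kind u = Checking"
      using ureset by simp
    have tv: "tv \<in> pricing" "snd (Y tv) + L * eta < f (x tv)"
      using assms by (auto simp: underpriced_def)
    have "Y u = Y tv"
      using range_frozen[of tv u] range_frozen[of u tv] tv uR is_check
      by (cases "tv \<le> u") (auto simp: mem_run_rounds_iff)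
    moreover have "x u \<in> cube01 d"
      using uR run_le x_in_cube by (simp add: mem_run_rounds_iff)
    then have "\<bar>f (x u) - f (x tv)\<bar> \<le> L * eta"
      using f_lipschitz_on_cell[of "x u" "x tv"] L_mul_inverse_grid_le pricing_round(1)[OF tv(1)] tv(1) uR
      by (fastforce simp: mem_run_rounds_iff)
    ultimately have "price u < f (x u)"
      using tv(2) is_check uR by (simp add: price_eq guess_def mem_run_rounds_iff)
    then have "corr u"
      using not_surprised is_check
      by (auto simp: surprise_iff surprised_by_def signal_def sgn01_def split: if_splits)
    then show ?thesis
      using uR by simp
  qed simp
qed

lemma card_underpriced: "real (card underpriced) \<le> tau * (real (card corrupted) + 2)"
proof (cases "underpriced = {}")
  case True
  then show ?thesis
    using tau_ge_1 by simp
next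
  case False
  then obtain tv where "tv \<in> underpriced"
    by blast
  have fin: "finite corrupted"
    by (simp add: run_rounds_def)
  have "card (resets_before e) \<le> card (corrupted \<union> {e - 1})"
    using resets_subset_if_underpriced[OF \<open>tv \<in> underpriced\<close>] fin by (intro card_mono) auto
  also have "\<dots> \<le> card corrupted + 1"
    using card_Un_le[of corrupted "{e - 1}"] by simp
  finally have resets: "real (card (resets_before e)) \<le> real (card corrupted) + 1"
    by linarith
  have "card underpriced \<le> card (pricing_before e)"
    unfolding pricing_eq_pricing_before[symmetric] underpriced_def
    by (intro card_mono) (auto simp: run_rounds_def)
  then have "real (card underpriced) \<le> tau * real (card (resets_before e)) + real (counter e)"
    using card_pricing_before[OF run_le(1)] by linarith
  also have "\<dots> \<le> tau * (real (card corrupted) + 1) + tau"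
    using resets state_bounds tau_ge_1 by (intro add_mono mult_left_mono) auto
  finally show ?thesis
    by (simp add: algebra_simps)
qed

lemma corrupted_if_mispriced:
  assumes "t \<in> pricing" "f (x t) \<notin> {fst (Y t)..snd (Y t)}"
  shows "corrupted \<noteq> {}"
proof
  assume "corrupted = {}"
  then have "\<forall>u\<in>{s..<t}. cell (x u) = j \<longrightarrow> \<not> corr u"
    using assms(1) by (auto simp: mem_run_rounds_iff)
  then show False
    using range_contains_values[of t "x t"] assms pricing_round(1)[OF assms(1)]
    by (auto simp: mem_run_rounds_iff)
qed

lemma card_mispriced: "real (card (overpriced \<union> underpriced)) \<le> 5 * tau * real (card corrupted)"
proof (cases "overpriced \<union> underpriced = {}")
  case True
  then show ?thesis
    using tau_ge_1 by simp
next
  case False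
  then obtain t where "t \<in> pricing" "f (x t) \<notin> {fst (Y t)..snd (Y t)}"
    using L_eta_pos by (force simp: overpriced_def underpriced_def)
  then have "1 \<le> real (card corrupted)"
    using corrupted_if_mispriced by (simp add: Suc_le_eq card_gt_0_iff run_rounds_def)
  have fin: "finite corrupted"
    by (simp add: run_rounds_def)
  have "card overpriced \<le> card (corrupted \<union> {e - 1})"
    using overpriced_subset fin by (intro card_mono) auto
  also have "\<dots> \<le> card corrupted + 1"
    using card_Un_le[of corrupted "{e - 1}"] by simp
  finally have "real (card (overpriced \<union> underpriced)) \<le> real (card corrupted) + 1 + real (card underpriced)"
    using card_Un_le[of overpriced underpriced] by linarith
  moreover have "real (card corrupted) \<le> tau * real (card corrupted)" "tau \<le> tau * real (card corrupted)"
    using tau_ge_1 \<open>1 \<le> real (card corrupted)\<close> by simp_all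
  moreover have "real (card underpriced) \<le> tau * real (card corrupted) + 2 * tau"
    using card_underpriced by (simp add: algebra_simps)
  ultimately have "real (card (overpriced \<union> underpriced)) \<le> 5 * (tau * real (card corrupted))"
    using \<open>1 \<le> real (card corrupted)\<close> by linarith
  then show ?thesis
    by (simp add: mult.assoc)
qed

lemma pricing_loss_le_L:
  assumes "t \<in> pricing"
  shows "pricing_loss (f (x t)) (price t) \<le> L"
proof -
  have "0 \<le> price t"
    using pricing_round(2)[OF assms] state_bounds[of t j] by simp
  then have "pricing_loss (f (x t)) (price t) \<le> f (x t)"
    by (rule pricing_loss_le_value)
  also have "\<dots> \<le> L"
    using f_range pricing_round(1)[OF assms] by blast
  finally show ?thesis .
qed

lemma pricing_loss_well_priced:
  assumes "t \<in> pricing - (overpriced \<union> underpriced)"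
  shows "pricing_loss (f (x t)) (price t) \<le> 11 * L * eta"
proof -
  have "fst (Y t) \<le> f (x t)" "f (x t) \<le> snd (Y t) + L * eta"
    using assms by (auto simp: overpriced_def underpriced_def)
  then show ?thesis
    using pricing_round[of t] assms by (simp add: pricing_loss_accepted)
qed

lemma total_pricing_loss:
  "(\<Sum>t\<in>pricing. pricing_loss (f (x t)) (price t))
     \<le> 11 * L * (real (card R) * eta + real (card corrupted) * tau)"
proof -
  let ?B = "overpriced \<union> underpriced"
  have fin: "finite pricing"
    by (simp add: run_rounds_def)
  have "card (pricing - ?B) \<le> card R"
    by (intro card_mono) (auto simp: run_rounds_def)
  then have "real (card (pricing - ?B)) * (11 * L * eta) \<le> real (card R) * (11 * L * eta)"
    using L_eta_pos by (intro mult_right_mono) auto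
  then have well: "(\<Sum>t\<in>pricing - ?B. pricing_loss (f (x t)) (price t)) \<le> real (card R) * (11 * L * eta)"
    using sum_bounded_above[of "pricing - ?B" _ "11 * L * eta"] pricing_loss_well_priced
    by (meson order_trans)
  have "(\<Sum>t\<in>?B. pricing_loss (f (x t)) (price t)) \<le> real (card ?B) * L"
    by (rule sum_bounded_above) (auto simp: overpriced_def underpriced_def intro: pricing_loss_le_L)
  also have "\<dots> \<le> 5 * tau * real (card corrupted) * L"
    using card_mispriced L_pos by (intro mult_right_mono) auto
  also have "\<dots> \<le> 11 * tau * real (card corrupted) * L"
    using tau_ge_1 L_pos by (intro mult_right_mono) auto
  finally have mispriced: "(\<Sum>t\<in>?B. pricing_loss (f (x t)) (price t)) \<le> 11 * tau * real (card corrupted) * L" .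
  have "?B \<subseteq> pricing"
    by (auto simp: overpriced_def underpriced_def)
  then have "(\<Sum>t\<in>pricing. pricing_loss (f (x t)) (price t))
      = (\<Sum>t\<in>pricing - ?B. pricing_loss (f (x t)) (price t)) + (\<Sum>t\<in>?B. pricing_loss (f (x t)) (price t))"
    using fin by (rule sum.subset_diff)
  with well mispriced show ?thesis
    by (simp add: algebra_simps)
qed

end

theorem lemma29:
  shows "\<exists>K>0. \<forall>(L::real) (d::nat) (T::nat) (tau0::real) f x corr j s e.
    L > 0 \<longrightarrow> d \<ge> 1 \<longrightarrow> T \<ge> 2 \<longrightarrow> tau0 \<ge> 1 \<longrightarrow>
    (\<forall>p\<in>cube01 d. 0 \<le> f p \<and> f p \<le> L) \<longrightarrow>
    (\<forall>p\<in>cube01 d. \<forall>p'\<in>cube01 d. \<bar>f p - f p'\<bar> \<le> L * supdist d p p') \<longrightarrow>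
    (\<forall>t<T. x t \<in> cube01 d) \<longrightarrow>
    is_run L d T tau0 f x corr j s e \<longrightarrow>
    (\<Sum>t\<in>{t\<in>run_rounds d T x j s e. kind_at L d T tau0 f x corr t = Pricing}.
        pricing_loss (f (x t)) (guess_at L d T tau0 f x corr t))
      \<le> K * L * (real (card (run_rounds d T x j s e)) * eta0 T d
                 + real (card {t\<in>run_rounds d T x j s e. corr t}) * tau0)"
proof (intro exI[of _ 11] conjI allI impI)
  fix L :: real and d T :: nat and tau0 :: real and f x corr j s e
  assume "L > 0" "d \<ge> 1" "T \<ge> 2" "tau0 \<ge> 1"
    "\<forall>p\<in>cube01 d. 0 \<le> f p \<and> f p \<le> L"
    "\<forall>p\<in>cube01 d. \<forall>p'\<in>cube01 d. \<bar>f p - f p'\<bar> \<le> L * supdist d p p'"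
    "\<forall>t<T. x t \<in> cube01 d" "is_run L d T tau0 f x corr j s e"
  then interpret cell_run L d T tau0 f x corr j s e
    by unfold_locales
  show "(\<Sum>t\<in>{t\<in>run_rounds d T x j s e. kind_at L d T tau0 f x corr t = Pricing}.
        pricing_loss (f (x t)) (guess_at L d T tau0 f x corr t))
      \<le> 11 * L * (real (card (run_rounds d T x j s e)) * eta0 T d
                 + real (card {t\<in>run_rounds d T x j s e. corr t}) * tau0)"
    by (rule total_pricing_loss)
qed simp

end
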